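(* Let $T$ be a rooted binary phylogenetic tree under the $N_r$ model with state set $\{\alpha_1,\dots,\alpha_r\}$. Then for every $1\le k\le r-1$, $P_k(T)\ge Q_k(T)$.
   Context: A rooted binary phylogenetic tree is a finite tree with a distinguished root vertex $\rho$ of out-degree 2, all edges directed away from $\rho$, and every other vertex of in-degree 1 and out-degree 0 or 2; out-degree-0 vertices are leaves. Under the Neyman $r$-state model $N_r$ ($r\ge2$) on $\mathcal A=\{\alpha_1,\dots,\alpha_r\}$, each edge $e$ carries a substitution probability $p_e\in[0,\frac{r-1}{r}]$; given $F(\rho)$, states propagate independently along edges: for an edge $(u,v)$, $F(v)=F(u)$ with probability $1-p_e$, and otherwise $F(v)$ is uniform among the $r-1$ other states; $f$ is the restriction of $F$ to the leaves. Fitch sets: each leaf $x$ gets $\{f(x)\}$; a vertex with children $v_1,v_2$ gets $\mathrm{FS}(v_1)\cap\mathrm{FS}(v_2)$ if nonempty, else the union; $\mathrm{FS}(f,T)$ is the Fitch set of $\rho$. $P_k(T)=\mathbb P(\mathrm{FS}(f,T)=\mathcal R\mid F(\rho)=\alpha_1)$ for any $\mathcal R\subseteq\mathcal A$ with $\alpha_1\in\mathcal R$, $|\mathcal R|=k$, and $Q_k(T)=\mathbb P(\mathrm{FS}(f,T)=\mathcal R\mid F(\rho)=\alpha_1)$ for any $\mathcal R$ with $\alpha_1\notin\mathcal R$, $|\mathcal R|=k$ (independent of the choice of $\mathcal R$ by symmetry). *)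

theory Defs
  imports "HOL-Probability.Probability"
begin

text \<open>States alpha_1..alpha_r are encoded as 0..r-1 (alpha_1 = 0).
A rooted binary tree: a leaf, or a vertex with two children; Node p1 t1 p2 t2
has edges to t1 and t2 carrying substitution probabilities p1 and p2.
Leaves are identified by their left-to-right position.\<close>

datatype ptree = Leaf | Node real ptree real ptree

fun nleaves :: "ptree \<Rightarrow> nat" where
  "nleaves Leaf = 1"
| "nleaves (Node _ t1 _ t2) = nleaves t1 + nleaves t2"

fun edge_probs :: "ptree \<Rightarrow> real set" where
  "edge_probs Leaf = {}"
| "edge_probs (Node p1 t1 p2 t2) = {p1, p2} \<union> edge_probs t1 \<union> edge_probs t2"

definition nr_step :: "nat \<Rightarrow> real \<Rightarrow> nat \<Rightarrow> nat pmf" where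
  "nr_step r p a = bind_pmf (bernoulli_pmf p)
     (\<lambda>change. if change then pmf_of_set ({0..<r} - {a}) else return_pmf a)"

text \<open>Distribution of the leaf character f (list of leaf states, left to right)
given the state of the root of the (sub)tree.\<close>
fun nr_char :: "nat \<Rightarrow> ptree \<Rightarrow> nat \<Rightarrow> nat list pmf" where
  "nr_char r Leaf a = return_pmf [a]"
| "nr_char r (Node p1 t1 p2 t2) a =
     bind_pmf (nr_step r p1 a) (\<lambda>b1.
     bind_pmf (nr_step r p2 a) (\<lambda>b2.
     bind_pmf (nr_char r t1 b1) (\<lambda>f1.
     bind_pmf (nr_char r t2 b2) (\<lambda>f2.
     return_pmf (f1 @ f2)))))"

fun fitch :: "ptree \<Rightarrow> nat list \<Rightarrow> nat set" where
  "fitch Leaf f = {hd f}"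
| "fitch (Node _ t1 _ t2) f =
     (let A = fitch t1 (take (nleaves t1) f);
          B = fitch t2 (drop (nleaves t1) f)
      in if A \<inter> B \<noteq> {} then A \<inter> B else A \<union> B)"

definition fitch_prob :: "nat \<Rightarrow> ptree \<Rightarrow> nat set \<Rightarrow> real" where
  "fitch_prob r T R = measure_pmf.prob (nr_char r T 0) {f. fitch T f = R}"

end

theory Submission
  imports Defs "HOL-Combinatorics.Permutations"
begin

text \<open>
  The Fitch set of a node is a function of the Fitch sets of its two children, and these are
  independent given the state of the node; so the distribution \<open>D\<^sub>a\<close> of the root
  Fitch set given root state \<open>a\<close> satisfies a recursion along the tree. By induction one
  shows \<open>D\<^sub>b(S) \<le> D\<^sub>a(S)\<close> whenever \<open>a \<in> S\<close> and \<open>b \<notin> S\<close>: if the children's sets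
  \<open>A\<close>, \<open>B\<close> merge to such an \<open>S\<close>, neither contains \<open>b\<close> without \<open>a\<close>. For such a child set
  either \<open>a \<in> A\<close>, \<open>b \<notin> A\<close>, and the edge mixes the induction hypothesis with a nonnegative
  weight, or \<open>A\<close> is invariant under swapping \<open>a\<close> and \<open>b\<close> and both sides agree by the
  symmetry of the model. By the same symmetry \<open>Q\<^sub>k = D\<^sub>0(R') = D\<^sub>c(R)\<close> for any state
  \<open>c \<notin> R\<close>, which is at most \<open>D\<^sub>0(R) = P\<^sub>k\<close>.
\<close>

definition fitch_merge :: "'a set \<Rightarrow> 'a set \<Rightarrow> 'a set" where
  "fitch_merge A B = (if A \<inter> B \<noteq> {} then A \<inter> B else A \<union> B)"

definition nr_edge :: "nat \<Rightarrow> real \<Rightarrow> (nat \<Rightarrow> 'b pmf) \<Rightarrow> nat \<Rightarrow> 'b pmf" where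
  "nr_edge r p M a = bind_pmf (nr_step r p a) M"

primrec fitch_dist :: "nat \<Rightarrow> ptree \<Rightarrow> nat \<Rightarrow> nat set pmf" where
  "fitch_dist r Leaf a = return_pmf {a}"
| "fitch_dist r (Node p1 t1 p2 t2) a =
     bind_pmf (nr_edge r p1 (fitch_dist r t1) a) (\<lambda>A.
     bind_pmf (nr_edge r p2 (fitch_dist r t2) a) (\<lambda>B. return_pmf (fitch_merge A B)))"

lemma fitch_merge_commute: "fitch_merge A B = fitch_merge B A"
  unfolding fitch_merge_def by auto

lemma fitch_merge_subset: "fitch_merge A B \<subseteq> A \<union> B"
  unfolding fitch_merge_def by auto

lemma image_fitch_merge: "inj f \<Longrightarrow> f ` fitch_merge A B = fitch_merge (f ` A) (f ` B)"
  unfolding fitch_merge_def by (auto simp: image_Int[symmetric] image_Un)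

lemma fitch_merge_eq_imp_mem:
  assumes "fitch_merge A B = S" "a \<in> S" "b \<notin> S" "b \<in> A"
  shows "a \<in> A"
  using assms unfolding fitch_merge_def by (auto split: if_splits)

lemma nr_step_other_states_nonempty:
  assumes "r \<ge> (2::nat)"
  shows "{0..<r} - {a} \<noteq> {}"
proof -
  have "0 \<in> {0..<r} - {a} \<or> 1 \<in> {0..<r} - {a}" using assms by auto
  then show ?thesis by blast
qed

lemma set_pmf_nr_step:
  assumes "r \<ge> 2" "a < r"
  shows "set_pmf (nr_step r p a) \<subseteq> {0..<r}"
  using assms nr_step_other_states_nonempty[OF assms(1)]
  by (auto simp: nr_step_def split: if_splits)

lemma pmf_nr_step:
  assumes "r \<ge> 2" "a < r" "0 \<le> p" "p \<le> 1"
  shows "pmf (nr_step r p a) b = (if b = a then 1 - p else if b < r then p / (real r - 1) else 0)"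
  using assms nr_step_other_states_nonempty[OF assms(1), of a]
  by (auto simp: nr_step_def pmf_bind indicator_def of_nat_diff)

lemma map_pmf_nr_step:
  assumes "r \<ge> 2" "\<pi> permutes {0..<r}"
  shows "map_pmf \<pi> (nr_step r p a) = nr_step r p (\<pi> a)"
proof -
  have inj: "inj \<pi>" using assms(2) by (rule permutes_inj)
  have "\<pi> ` ({0..<r} - {a}) = {0..<r} - {\<pi> a}"
    using inj permutes_image[OF assms(2)] by (simp add: image_set_diff)
  then show ?thesis
    using nr_step_other_states_nonempty[OF assms(1)] inj
    by (auto simp: nr_step_def map_bind_pmf map_pmf_of_set_inj inj_on_subset intro!: bind_pmf_cong)
qed

lemma set_pmf_nr_edge:
  assumes "r \<ge> 2" "a < r" "\<And>b. b < r \<Longrightarrow> set_pmf (M b) \<subseteq> U"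
  shows "set_pmf (nr_edge r p M a) \<subseteq> U"
  using set_pmf_nr_step[OF assms(1,2)] assms(3) by (fastforce simp: nr_edge_def)

lemma map_pmf_nr_edge:
  assumes "r \<ge> 2" "\<pi> permutes {0..<r}" "\<And>b. map_pmf g (M b) = M (\<pi> b)"
  shows "map_pmf g (nr_edge r p M a) = nr_edge r p M (\<pi> a)"
proof -
  have "map_pmf g (nr_edge r p M a) = bind_pmf (nr_step r p a) (\<lambda>b. M (\<pi> b))"
    by (simp add: nr_edge_def map_bind_pmf assms(3))
  also have "\<dots> = nr_edge r p M (\<pi> a)"
    by (simp add: nr_edge_def map_pmf_nr_step[OF assms(1,2), symmetric] bind_map_pmf)
  finally show ?thesis .
qed

lemma pmf_nr_edge:
  assumes "r \<ge> 2" "a < r" "0 \<le> p" "p \<le> 1"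
  shows "pmf (nr_edge r p M a) x
     = (1 - p - p / (real r - 1)) * pmf (M a) x + p / (real r - 1) * (\<Sum>b<r. pmf (M b) x)"
proof -
  let ?K = "1 - p - p / (real r - 1)" and ?q = "p / (real r - 1)"
  have "pmf (nr_edge r p M a) x = (\<Sum>b<r. pmf (nr_step r p a) b * pmf (M b) x)"
    unfolding nr_edge_def pmf_bind
    using set_pmf_nr_step[OF assms(1,2), of p]
    by (subst integral_measure_pmf[of "{..<r}"]) (auto simp: subset_eq)
  also have "\<dots> = (\<Sum>b<r. (if b = a then ?K * pmf (M b) x else 0) + ?q * pmf (M b) x)"
    by (rule sum.cong) (auto simp: pmf_nr_step[OF assms] algebra_simps)
  also have "\<dots> = ?K * pmf (M a) x + ?q * (\<Sum>b<r. pmf (M b) x)"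
    using assms(2) by (simp add: sum.distrib sum_distrib_left)
  finally show ?thesis .
qed

text \<open>The bound \<open>p \<le> (r - 1) / r\<close> is exactly what makes the weight
  \<open>1 - p - p / (r - 1)\<close> of the starting state nonnegative.\<close>
lemma nr_edge_pmf_mono:
  assumes "r \<ge> 2" "a < r" "b < r" "0 \<le> p" "p \<le> (real r - 1) / real r"
    and "pmf (M b) x \<le> pmf (M a) x"
  shows "pmf (nr_edge r p M b) x \<le> pmf (nr_edge r p M a) x"
proof -
  have r: "real r - 1 > 0" using assms(1) by simp
  have "(real r - 1) / real r \<le> 1" using r by simp
  then have p1: "p \<le> 1" using assms(5) by linarith
  have "p * real r \<le> real r - 1" using assms(1,5) by (simp add: le_divide_eq)
  then have "p \<le> (1 - p) * (real r - 1)" by (simp add: algebra_simps)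
  then have "p / (real r - 1) \<le> 1 - p" using r by (simp add: divide_le_eq)
  then show ?thesis
    unfolding pmf_nr_edge[OF assms(1,2,4) p1] pmf_nr_edge[OF assms(1,3,4) p1]
    using mult_left_mono[OF assms(6), of "1 - p - p / (real r - 1)"] by simp
qed

lemma set_pmf_fitch_dist:
  assumes "r \<ge> 2" "a < r"
  shows "set_pmf (fitch_dist r T a) \<subseteq> Pow {0..<r}"
  using assms(2)
proof (induction T arbitrary: a)
  case Leaf
  then show ?case by simp
next
  case (Node p1 t1 p2 t2)
  have "set_pmf (nr_edge r p (fitch_dist r t) a) \<subseteq> Pow {0..<r}"
    if "\<And>b. b < r \<Longrightarrow> set_pmf (fitch_dist r t b) \<subseteq> Pow {0..<r}" for p t
    using set_pmf_nr_edge[OF assms(1) Node.prems] that by blast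
  with Node.IH have edges: "set_pmf (nr_edge r p1 (fitch_dist r t1) a) \<subseteq> Pow {0..<r}"
    "set_pmf (nr_edge r p2 (fitch_dist r t2) a) \<subseteq> Pow {0..<r}" by blast+
  show ?case
  proof
    fix X assume "X \<in> set_pmf (fitch_dist r (Node p1 t1 p2 t2) a)"
    then obtain A B where "A \<in> set_pmf (nr_edge r p1 (fitch_dist r t1) a)"
      "B \<in> set_pmf (nr_edge r p2 (fitch_dist r t2) a)" "X = fitch_merge A B" by auto
    then show "X \<in> Pow {0..<r}" using edges fitch_merge_subset[of A B] by blast
  qed
qed

lemma map_pmf_fitch_dist:
  assumes "r \<ge> 2" "\<pi> permutes {0..<r}"
  shows "map_pmf ((`) \<pi>) (fitch_dist r T a) = fitch_dist r T (\<pi> a)"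
proof (induction T arbitrary: a)
  case Leaf
  then show ?case by simp
next
  case (Node p1 t1 p2 t2)
  have inj: "inj \<pi>" using assms(2) by (rule permutes_inj)
  show ?case
    by (simp add: map_bind_pmf bind_map_pmf image_fitch_merge[OF inj]
        flip: map_pmf_nr_edge[where M = "fitch_dist r t1", OF assms Node.IH(1)]
              map_pmf_nr_edge[where M = "fitch_dist r t2", OF assms Node.IH(2)])
qed

lemma pmf_fitch_dist_permute:
  assumes "r \<ge> 2" "\<pi> permutes {0..<r}"
  shows "pmf (fitch_dist r T (\<pi> a)) (\<pi> ` S) = pmf (fitch_dist r T a) S"
proof -
  have "inj ((`) \<pi>)" using permutes_inj[OF assms(2)] by (simp add: inj_def inj_image_eq_iff)
  then show ?thesis by (metis map_pmf_fitch_dist[OF assms] pmf_map_inj')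
qed

lemma pmf_nr_edge_fitch_dist_permute:
  assumes "r \<ge> 2" "\<pi> permutes {0..<r}"
  shows "pmf (nr_edge r p (fitch_dist r T) (\<pi> a)) (\<pi> ` S) = pmf (nr_edge r p (fitch_dist r T) a) S"
proof -
  have "inj ((`) \<pi>)" using permutes_inj[OF assms(2)] by (simp add: inj_def inj_image_eq_iff)
  then show ?thesis
    by (metis map_pmf_nr_edge[where M = "fitch_dist r T", OF assms map_pmf_fitch_dist[OF assms]]
        pmf_map_inj')
qed

lemma length_nr_char: "f \<in> set_pmf (nr_char r T a) \<Longrightarrow> length f = nleaves T"
  by (induction T arbitrary: a f) auto

lemma fitch_Node_append:
  "length f1 = nleaves t1 \<Longrightarrow> fitch (Node p1 t1 p2 t2) (f1 @ f2) = fitch_merge (fitch t1 f1) (fitch t2 f2)"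
  by (simp add: fitch_merge_def Let_def)

lemma map_pmf_fitch_nr_char: "map_pmf (fitch T) (nr_char r T a) = fitch_dist r T a"
proof (induction T arbitrary: a)
  case Leaf
  then show ?case by simp
next
  case (Node p1 t1 p2 t2)
  let ?s1 = "nr_step r p1 a" and ?s2 = "nr_step r p2 a"
  have "map_pmf (fitch (Node p1 t1 p2 t2)) (nr_char r (Node p1 t1 p2 t2) a)
    = bind_pmf ?s1 (\<lambda>b1. bind_pmf ?s2 (\<lambda>b2. bind_pmf (nr_char r t1 b1) (\<lambda>f1.
        bind_pmf (nr_char r t2 b2) (\<lambda>f2. return_pmf (fitch_merge (fitch t1 f1) (fitch t2 f2))))))"
    unfolding nr_char.simps map_bind_pmf map_return_pmf
    by (intro bind_pmf_cong refl) (simp only: fitch_Node_append length_nr_char)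
  also have "\<dots> = bind_pmf ?s1 (\<lambda>b1. bind_pmf ?s2 (\<lambda>b2. bind_pmf (fitch_dist r t1 b1) (\<lambda>A.
        bind_pmf (fitch_dist r t2 b2) (\<lambda>B. return_pmf (fitch_merge A B)))))"
    by (simp add: bind_map_pmf flip: Node.IH)
  also have "\<dots> = fitch_dist r (Node p1 t1 p2 t2) a"
    by (simp add: nr_edge_def bind_assoc_pmf bind_commute_pmf[of "fitch_dist r t1 _" ?s2])
  finally show ?case .
qed

lemma fitch_prob_eq_pmf_fitch_dist: "fitch_prob r T R = pmf (fitch_dist r T 0) R"
  by (simp add: fitch_prob_def measure_pmf_single[symmetric] vimage_def
      flip: map_pmf_fitch_nr_char[of T r 0])

lemma pmf_bind_bind_return:
  assumes "finite U" "finite V" "set_pmf M \<subseteq> U" "set_pmf N \<subseteq> V"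
  shows "pmf (bind_pmf M (\<lambda>x. bind_pmf N (\<lambda>y. return_pmf (f x y)))) z
     = (\<Sum>x\<in>U. \<Sum>y\<in>V. if f x y = z then pmf M x * pmf N y else 0)"
proof -
  have "pmf (bind_pmf N (\<lambda>y. return_pmf (f x y))) z = (\<Sum>y\<in>V. if f x y = z then pmf N y else 0)" for x
    using assms(2,4) by (subst pmf_bind, subst integral_measure_pmf[of V]) (auto simp: sum.inter_filter)
  then show ?thesis
    using assms(1,3) by (subst pmf_bind, subst integral_measure_pmf[of U])
      (auto simp: sum_distrib_left if_distrib intro!: sum.cong)
qed

lemma pmf_nr_edge_fitch_dist_mono:
  assumes "r \<ge> 2" "a < r" "b < r" "0 \<le> p" "p \<le> (real r - 1) / real r"
    and IH: "\<And>S. a \<in> S \<Longrightarrow> b \<notin> S \<Longrightarrow> pmf (fitch_dist r t b) S \<le> pmf (fitch_dist r t a) S"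
    and "b \<in> A \<longrightarrow> a \<in> A"
  shows "pmf (nr_edge r p (fitch_dist r t) b) A \<le> pmf (nr_edge r p (fitch_dist r t) a) A"
proof (cases "a \<in> A \<and> b \<notin> A")
  case True
  then show ?thesis using nr_edge_pmf_mono[OF assms(1-5) IH] by blast
next
  case False
  then have "Transposition.transpose a b ` A = A" using assms(7) by (intro transpose_image_eq) blast
  moreover have "Transposition.transpose a b permutes {0..<r}"
    using assms(2,3) by (simp add: permutes_swap_id)
  ultimately show ?thesis
    using pmf_nr_edge_fitch_dist_permute[OF assms(1), of "Transposition.transpose a b" p t a A]
    by simp
qed

lemma pmf_fitch_dist_mono:
  assumes "r \<ge> 2" "a < r" "b < r"
    and "\<forall>p \<in> edge_probs T. 0 \<le> p \<and> p \<le> (real r - 1) / real r"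
    and "a \<in> S" "b \<notin> S"
  shows "pmf (fitch_dist r T b) S \<le> pmf (fitch_dist r T a) S"
  using assms(4-6)
proof (induction T arbitrary: S)
  case Leaf
  then show ?case by (auto simp: indicator_def)
next
  case (Node p1 t1 p2 t2)
  have edge1: "pmf (nr_edge r p1 (fitch_dist r t1) b) A \<le> pmf (nr_edge r p1 (fitch_dist r t1) a) A"
    and edge2: "pmf (nr_edge r p2 (fitch_dist r t2) b) A \<le> pmf (nr_edge r p2 (fitch_dist r t2) a) A"
    if "b \<in> A \<longrightarrow> a \<in> A" for A
    using Node.prems(1) that
    by (auto intro!: pmf_nr_edge_fitch_dist_mono[OF assms(1-3)] Node.IH)
  have sets: "set_pmf (nr_edge r p (fitch_dist r t) c) \<subseteq> Pow {0..<r}" if "c < r" for p t c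
    using set_pmf_nr_edge[OF assms(1) that set_pmf_fitch_dist[OF assms(1)]] .
  have fin: "finite (Pow {0..<r})" by simp
  show ?case
    unfolding fitch_dist.simps
      pmf_bind_bind_return[OF fin fin sets[OF assms(2)] sets[OF assms(2)]]
      pmf_bind_bind_return[OF fin fin sets[OF assms(3)] sets[OF assms(3)]]
  proof (intro sum_mono)
    fix A B
    show "(if fitch_merge A B = S then pmf (nr_edge r p1 (fitch_dist r t1) b) A
            * pmf (nr_edge r p2 (fitch_dist r t2) b) B else 0)
       \<le> (if fitch_merge A B = S then pmf (nr_edge r p1 (fitch_dist r t1) a) A
            * pmf (nr_edge r p2 (fitch_dist r t2) a) B else 0)"
    proof (cases "fitch_merge A B = S")
      case True
      then have "b \<in> A \<longrightarrow> a \<in> A" "b \<in> B \<longrightarrow> a \<in> B"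
        using fitch_merge_eq_imp_mem[of _ _ S a b] fitch_merge_commute Node.prems(2,3) by metis+
      then show ?thesis using True by (simp add: mult_mono edge1 edge2)
    qed simp
  qed
qed

lemma obtain_permutes_image:
  assumes "finite S" "A \<subseteq> S" "B \<subseteq> S" "card A = card B"
  obtains \<pi> where "\<pi> permutes S" "\<pi> ` A = B"
proof -
  have fin: "finite A" "finite B" using assms finite_subset by blast+
  obtain f where f: "bij_betw f A B" using finite_same_card_bij[OF fin assms(4)] by blast
  have "card (S - A) = card (S - B)"
    using card_Diff_subset[OF fin(1) assms(2)] card_Diff_subset[OF fin(2) assms(3)] assms(4) by simp
  then obtain g where g: "bij_betw g (S - A) (S - B)"
    using finite_same_card_bij[OF finite_Diff[OF assms(1)] finite_Diff[OF assms(1)]] by blast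
  define h where "h x = (if x \<in> A then f x else g x)" for x
  have "bij_betw h (A \<union> (S - A)) (B \<union> (S - B))"
    unfolding h_def by (rule bij_betw_disjoint_Un[OF f g]) auto
  then have "bij_betw h S S" using assms(2,3) by (simp add: Un_absorb1)
  then have "restrict_id h S permutes S" by (rule permutes_restrict_id)
  moreover have "restrict_id h S ` A = f ` A"
    using assms(2) by (intro image_cong) (auto simp: h_def)
  then have "restrict_id h S ` A = B" using f by (simp add: bij_betw_def)
  ultimately show ?thesis using that by blast
qed

theorem theorem6:
  fixes r k :: nat and T :: ptree and R R' :: "nat set"
  assumes "r \<ge> 2"
    and "T \<noteq> Leaf"
    and "\<forall>p \<in> edge_probs T. 0 \<le> p \<and> p \<le> (real r - 1) / real r"
    and "1 \<le> k" and "k \<le> r - 1"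
    and "R \<subseteq> {0..<r}" and "0 \<in> R" and "card R = k"
    and "R' \<subseteq> {0..<r}" and "0 \<notin> R'" and "card R' = k"
  shows "fitch_prob r T R \<ge> fitch_prob r T R'"
proof -
  have "\<not> {0..<r} \<subseteq> R"
    using card_mono[of R "{0..<r}"] finite_subset[OF assms(6)] assms(1,5,8) by fastforce
  then obtain c where c: "c < r" "c \<notin> R" by (meson atLeastLessThan_iff subsetI)
  let ?\<tau> = "Transposition.transpose 0 c"
  have \<tau>: "?\<tau> permutes {0..<r}" using c(1) assms(1) by (simp add: permutes_swap_id)
  have "?\<tau> ` R \<subseteq> {0..<r}" using image_mono[OF assms(6), of ?\<tau>] permutes_image[OF \<tau>] by simp
  moreover have "0 \<notin> ?\<tau> ` R" using c(2) assms(7) by (auto simp: transpose_eq_iff)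
  ultimately have "?\<tau> ` R \<subseteq> {1..<r}" "R' \<subseteq> {1..<r}"
    using assms(9,10) by (auto simp: subset_eq Suc_le_eq)
  moreover have "card R' = card (?\<tau> ` R)" using assms(8,11) by (simp add: card_image)
  ultimately obtain \<pi> where \<pi>: "\<pi> permutes {1..<r}" "\<pi> ` R' = ?\<tau> ` R"
    using obtain_permutes_image[OF finite_atLeastLessThan] by blast
  have "\<pi> permutes {0..<r}" "\<pi> 0 = 0"
    using permutes_subset[OF \<pi>(1)] permutes_not_in[OF \<pi>(1)] by auto
  then have "pmf (fitch_dist r T 0) R' = pmf (fitch_dist r T 0) (?\<tau> ` R)"
    using pmf_fitch_dist_permute[OF assms(1), of \<pi> T 0 R'] \<pi>(2) by simp
  also have "\<dots> = pmf (fitch_dist r T c) R"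
    using pmf_fitch_dist_permute[OF assms(1) \<tau>, of T c R] by simp
  also have "\<dots> \<le> pmf (fitch_dist r T 0) R"
    using pmf_fitch_dist_mono[OF assms(1) _ c(1) assms(3,7) c(2)] c(1) by simp
  finally show ?thesis by (simp add: fitch_prob_eq_pmf_fitch_dist)
qed

end
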